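(* Under the setup in the context, let $H_n\equiv(n\hat\sigma_{2sls}^2)^{-1}(\hat\beta_{ols}-\hat\beta_{2sls})^\top(Y_1^\top M_{Z_1}Y_1)(\hat\beta_{ols}-\hat\beta_{2sls})$. Then \[ \hat\sigma_u^2=\hat\sigma_{ols}^2\Big(1-\frac{t_{H_1}}{n}\Big)=\hat\sigma_{2sls}^2\Big(1-\frac{t_{H_2}}{n}-H_n\Big). \]
   Context: Data: $Y_1$ is an $n\times k_1$ matrix, $Y_2$ an $n\times 1$ vector, $Z_1$ an $n\times p_1$ matrix, $Z_2$ an $n\times p_2$ matrix, all real; $Z\equiv(Z_1,Z_2)$ and $X\equiv(Y_1,Z_1)$. For a matrix $A$ with $A^\top A$ nonsingular, $P_A\equiv A(A^\top A)^{-1}A^\top$ and $M_A\equiv I_n-P_A$. Standing assumptions: $Z^\top Z$, $X^\top X$, $X^\top P_Z X$ and $(X,\hat V)^\top(X,\hat V)$ are nonsingular, where $\hat V\equiv M_Z Y_1$. Define $\hat Y_1\equiv P_Z Y_1$, $\hat\theta_{ols}\equiv(X^\top X)^{-1}X^\top Y_2$, $\hat\theta_{2sls}\equiv(X^\top P_ZX)^{-1}X^\top P_Z Y_2$, and let $\hat\beta_{ols},\hat\beta_{2sls}$ be the leading $k_1\times1$ subvectors of $\hat\theta_{ols},\hat\theta_{2sls}$. Define $(\hat\theta_{cf}^\top,\hat\rho_{cf}^\top)^\top\equiv((X,\hat V)^\top(X,\hat V))^{-1}(X,\hat V)^\top Y_2$, $\hat\sigma_u^2\equiv n^{-1}\|Y_2-X\hat\theta_{cf}-\hat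 V\hat\rho_{cf}\|^2$, $\hat\sigma_{ols}^2\equiv n^{-1}\|Y_2-X\hat\theta_{ols}\|^2$, $\hat\sigma_{2sls}^2\equiv n^{-1}\|Y_2-X\hat\theta_{2sls}\|^2$; these three are assumed strictly positive. For scalars $s_1^2,s_2^2>0$ such that the matrix below is nonsingular, $t_{H,n}(s_1^2,s_2^2)\equiv(\hat\beta_{ols}-\hat\beta_{2sls})^\top\big(s_1^2(\hat Y_1^\top M_{Z_1}\hat Y_1)^{-1}-s_2^2(Y_1^\top M_{Z_1}Y_1)^{-1}\big)^{-1}(\hat\beta_{ols}-\hat\beta_{2sls})$, and $t_{H_1}\equiv t_{H,n}(\hat\sigma_{ols}^2,\hat\sigma_{ols}^2)$, $t_{H_2}\equiv t_{H,n}(\hat\sigma_{2sls}^2,\hat\sigma_{2sls}^2)$. *)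

theory Defs
  imports "HOL-Analysis.Analysis"
begin

text \<open>Matrices are rendered as \<open>real^'c^'r\<close> (rows indexed by 'r, columns by 'c).
  Horizontal concatenation (A, B) is indexed by the sum type of column indices.\<close>

definition hcat :: "real^('m::finite)^'r \<Rightarrow> real^'k^'r \<Rightarrow> real^('m + 'k)^'r" where
  "hcat A B = (\<chi> i j. case j of Inl a \<Rightarrow> A $ i $ a | Inr b \<Rightarrow> B $ i $ b)"

definition projm :: "real^'c^'r \<Rightarrow> real^'r^'r" where
  "projm A = A ** matrix_inv (transpose A ** A) ** transpose A"

definition annih :: "real^'c^'r \<Rightarrow> real^'r^'r" where
  "annih A = mat 1 - projm A"

definition lsq :: "real^'c^'r \<Rightarrow> real^'r \<Rightarrow> real^'c" where
  "lsq A y = matrix_inv (transpose A ** A) *v (transpose A *v y)"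

definition tsls :: "real^'w^'r \<Rightarrow> real^'c^'r \<Rightarrow> real^'r \<Rightarrow> real^'c" where
  "tsls Z X y = matrix_inv (transpose X ** projm Z ** X) *v (transpose X *v (projm Z *v y))"

definition lead :: "real^('k::finite + 'p::finite) \<Rightarrow> real^'k" where
  "lead v = (\<chi> i. v $ Inl i)"

definition tHn :: "real^'k^'r \<Rightarrow> real^'p^'r \<Rightarrow> real^'w^'r \<Rightarrow> real^'k \<Rightarrow> real^'k
                   \<Rightarrow> real \<Rightarrow> real \<Rightarrow> real" where
  "tHn Y1 Z1 Z bols b2 s1 s2 =
     (let d = bols - b2; Yh = projm Z ** Y1;
          A = transpose Yh ** annih Z1 ** Yh; B = transpose Y1 ** annih Z1 ** Y1
      in d \<bullet> (matrix_inv (s1 *\<^sub>R matrix_inv A - s2 *\<^sub>R matrix_inv B) *v d))"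

definition tHmat :: "real^'k^'r \<Rightarrow> real^'p^'r \<Rightarrow> real^'w^'r \<Rightarrow> real \<Rightarrow> real \<Rightarrow> real^'k^'k" where
  "tHmat Y1 Z1 Z s1 s2 =
     (let Yh = projm Z ** Y1;
          A = transpose Yh ** annih Z1 ** Yh; B = transpose Y1 ** annih Z1 ** Y1
      in s1 *\<^sub>R matrix_inv A - s2 *\<^sub>R matrix_inv B)"

end

theory Submission
  imports Defs
begin

text \<open>Write e_ols, e_2sls, e_cf for the three residual vectors and d for
  beta_ols - beta_2sls. The OLS and 2SLS fits differ by
  X (theta_ols - theta_2sls) = M_Z1 Y1 d, which is orthogonal to e_ols, so
  |e_2sls|^2 = |e_ols|^2 + d' B d with B = Y1' M_Z1 Y1. The control-function
  regression reproduces the 2SLS coefficient, theta_cf = theta_2sls, so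
  e_2sls = e_cf + Vh rho with Vh orthogonal to e_cf, and its normal equations give
  C rho = B d for C = Vh' Vh. Since C = B - A with A = Yh1' M_Z1 Yh1, the extra
  term rho' C rho = d' B C^-1 B d splits as d' B C^-1 A d + d' B d, and
  B C^-1 A = (A^-1 - B^-1)^-1 is the matrix in t_{H,n} up to the scalar.
  Dividing both Pythagorean identities by n gives the two formulas.\<close>

declare transpose_matrix_vector[simp del] vector_transpose_matrix[simp del]

section \<open>Matrix inverses and Gram matrices\<close>

lemma matrix_diff_ldistrib: "(A::'a::ring_1^'n^'m) ** (B - C) = A ** B - A ** C"
  by (simp add: matrix_matrix_mult_def vec_eq_iff sum_subtractf right_diff_distrib)

lemma matrix_diff_rdistrib: "((A::'a::ring_1^'n^'m) - B) ** C = A ** C - B ** C"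
  by (simp add: matrix_matrix_mult_def vec_eq_iff sum_subtractf left_diff_distrib)

lemma transpose_diff: "transpose ((A::'a::ring_1^'n^'m) - B) = transpose A - transpose B"
  by (simp add: transpose_def vec_eq_iff)

lemma inner_transpose_matrix_vector: "(transpose A *v y) \<bullet> x = y \<bullet> ((A::real^'n^'m) *v x)"
  by (simp add: transpose_matrix_vector dot_lmul_matrix)

lemma matrix_inv:
  fixes A :: "'a::semiring_1^'n^'m"
  assumes "invertible A"
  shows matrix_inv_right: "A ** matrix_inv A = mat 1"
    and matrix_inv_left: "matrix_inv A ** A = mat 1"
proof -
  obtain B where "A ** B = mat 1 \<and> B ** A = mat 1"
    using assms unfolding invertible_def by blast
  then have "A ** matrix_inv A = mat 1 \<and> matrix_inv A ** A = mat 1"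
    unfolding matrix_inv_def by (rule someI)
  then show "A ** matrix_inv A = mat 1" "matrix_inv A ** A = mat 1" by auto
qed

lemma matrix_inv_unique:
  fixes A :: "'a::field^'n^'n"
  assumes "B ** A = mat 1"
  shows "matrix_inv A = B"
proof -
  have "invertible A" using assms invertible_left_inverse by blast
  then have "matrix_inv A = (B ** A) ** matrix_inv A" using assms by simp
  also have "\<dots> = B" by (simp add: matrix_mul_assoc[symmetric] matrix_inv_right[OF \<open>invertible A\<close>])
  finally show ?thesis .
qed

lemma symmetric_matrix_inv:
  fixes G :: "'a::field^'n^'n"
  assumes "invertible G" "transpose G = G"
  shows "transpose (matrix_inv G) = matrix_inv G"
proof -
  have "transpose (matrix_inv G) ** G = transpose (G ** matrix_inv G)"
    using assms(2) by (simp add: matrix_transpose_mul)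
  then have "transpose (matrix_inv G) ** G = mat 1"
    by (simp add: matrix_inv_right[OF assms(1)])
  then show ?thesis using matrix_inv_unique by metis
qed

lemma matrix_inv_scaleR:
  fixes A :: "real^'n^'n"
  assumes "k \<noteq> 0" "invertible A"
  shows "matrix_inv (k *\<^sub>R A) = (1 / k) *\<^sub>R matrix_inv A"
  by (rule matrix_inv_unique) (simp add: assms matrix_scalar_ac matrix_inv_left)

lemma matrix_inv_diff_matrix_inv:
  fixes A B :: "real^'n^'n"
  assumes A: "invertible A" and B: "invertible B" and C: "invertible (B - A)"
  shows "invertible (matrix_inv A - matrix_inv B)"
    and "matrix_inv (matrix_inv A - matrix_inv B) = B ** matrix_inv (B - A) ** A"
proof -
  have "B ** matrix_inv (B - A) ** A ** (matrix_inv A - matrix_inv B)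
      = B ** matrix_inv (B - A) ** (B - A) ** matrix_inv B"
    by (simp add: matrix_diff_ldistrib matrix_diff_rdistrib matrix_mul_assoc[symmetric]
        matrix_inv_right[OF A] matrix_inv_right[OF B])
  then have left_inverse: "B ** matrix_inv (B - A) ** A ** (matrix_inv A - matrix_inv B) = mat 1"
    by (simp add: matrix_inv_left[OF C] matrix_inv_right[OF B] flip: matrix_mul_assoc)
  then show "invertible (matrix_inv A - matrix_inv B)"
    using invertible_left_inverse by blast
  show "matrix_inv (matrix_inv A - matrix_inv B) = B ** matrix_inv (B - A) ** A"
    using matrix_inv_unique[OF left_inverse] .
qed

lemma quadratic_form_solution:
  fixes A B :: "real^'n^'n"
  assumes "transpose B = B" "invertible (B - A)" "(B - A) *v r = B *v d"
  shows "r \<bullet> ((B - A) *v r) = d \<bullet> ((B ** matrix_inv (B - A) ** A) *v d) + d \<bullet> (B *v d)"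
proof -
  have "r = (matrix_inv (B - A) ** (B - A)) *v r"
    by (simp add: matrix_inv_left[OF assms(2)])
  then have r: "r = matrix_inv (B - A) *v (B *v d)"
    by (simp only: assms(3) flip: matrix_vector_mul_assoc)
  have "r \<bullet> ((B - A) *v r) = (transpose B *v d) \<bullet> r"
    using assms(1,3) by (metis inner_commute)
  also have "\<dots> = d \<bullet> (B *v (matrix_inv (B - A) *v (B *v d)))"
    by (subst r) (rule inner_transpose_matrix_vector)
  also have "\<dots> = d \<bullet> ((B ** matrix_inv (B - A) ** B) *v d)"
    by (simp only: matrix_vector_mul_assoc matrix_mul_assoc)
  also have "B ** matrix_inv (B - A) ** B = B ** matrix_inv (B - A) ** (A + (B - A))"
    by simp
  also have "\<dots> = B ** matrix_inv (B - A) ** A + B"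
    by (simp only: matrix_add_ldistrib matrix_inv_left[OF assms(2)] matrix_mul_rid
        flip: matrix_mul_assoc)
  finally show ?thesis by (simp add: matrix_vector_mult_add_rdistrib inner_add_right)
qed

lemma inner_gram: "x \<bullet> ((transpose A ** A) *v x) = (norm ((A::real^'n^'m) *v x))\<^sup>2"
  by (simp add: power2_norm_eq_inner inner_commute[of x] inner_transpose_matrix_vector
      flip: matrix_vector_mul_assoc)

lemma invertible_gram_iff:
  fixes A :: "real^'n^'m"
  shows "invertible (transpose A ** A) \<longleftrightarrow> (\<forall>x. A *v x = 0 \<longrightarrow> x = 0)"
proof -
  have "(transpose A ** A) *v x = 0 \<longleftrightarrow> A *v x = 0" for x
    by (metis inner_gram inner_zero_right matrix_vector_mul_assoc matrix_vector_mult_0_right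
        norm_eq_zero zero_eq_power2)
  then show ?thesis
    by (simp add: invertible_left_inverse matrix_left_invertible_ker)
qed

lemma orthogonal_column_space:
  fixes A :: "real^'c^'r"
  assumes "transpose A *v e = 0"
  shows "orthogonal e (A *v x)"
  using inner_transpose_matrix_vector[of A e x] assms by (simp add: orthogonal_def)

lemma gram_symmetric_idempotent:
  fixes E :: "real^'n^'n"
  assumes "transpose E = E" "E ** E = E"
  shows "transpose Q ** E ** Q = transpose (E ** Q) ** (E ** Q)"
proof -
  have "transpose (E ** Q) ** (E ** Q) = transpose Q ** (E ** E) ** Q"
    by (simp add: matrix_transpose_mul assms(1) matrix_mul_assoc)
  then show ?thesis by (simp add: assms(2))
qed

section \<open>Projections and least squares\<close>

lemma projm_mult_self:
  fixes A :: "real^'c^'r"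
  assumes "invertible (transpose A ** A)"
  shows "projm A ** A = A"
  by (simp add: projm_def matrix_inv_left[OF assms] flip: matrix_mul_assoc)

lemma projm_symmetric:
  fixes A :: "real^'c^'r"
  assumes "invertible (transpose A ** A)"
  shows "transpose (projm A) = projm A"
proof -
  have "transpose (matrix_inv (transpose A ** A)) = matrix_inv (transpose A ** A)"
    using assms by (simp add: symmetric_matrix_inv matrix_transpose_mul)
  then show ?thesis by (simp add: projm_def matrix_transpose_mul matrix_mul_assoc)
qed

lemma projm_idempotent:
  fixes A :: "real^'c^'r"
  assumes "invertible (transpose A ** A)"
  shows "projm A ** projm A = projm A"
proof -
  have "projm A ** projm A = (projm A ** A) ** matrix_inv (transpose A ** A) ** transpose A"
    by (simp add: projm_def[of A] matrix_mul_assoc)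
  also have "\<dots> = projm A"
    by (simp only: projm_mult_self[OF assms]) (simp add: projm_def)
  finally show ?thesis .
qed

lemma annih_mult_self:
  fixes A :: "real^'c^'r"
  assumes "invertible (transpose A ** A)"
  shows "annih A ** A = 0"
  by (simp add: annih_def matrix_diff_rdistrib projm_mult_self[OF assms])

lemma annih_symmetric:
  fixes A :: "real^'c^'r"
  assumes "invertible (transpose A ** A)"
  shows "transpose (annih A) = annih A"
  by (simp add: annih_def transpose_diff projm_symmetric[OF assms])

lemma annih_idempotent:
  fixes A :: "real^'c^'r"
  assumes "invertible (transpose A ** A)"
  shows "annih A ** annih A = annih A"
  by (simp add: annih_def matrix_diff_rdistrib matrix_diff_ldistrib projm_idempotent[OF assms])

lemma projm_annih_projm_nested:
  fixes Z :: "real^'w^'r" and Z1 :: "real^'p^'r"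
  assumes "invertible (transpose Z ** Z)" "projm Z ** Z1 = Z1"
  shows "projm Z ** annih Z1 ** projm Z = projm Z - projm Z1"
proof -
  have "transpose Z1 ** projm Z = transpose Z1"
    by (metis assms matrix_transpose_mul projm_symmetric)
  then have "projm Z1 ** projm Z = projm Z1"
    by (simp add: projm_def flip: matrix_mul_assoc)
  moreover have "projm Z ** projm Z1 = projm Z1"
    using assms(2) by (simp add: projm_def[of Z1] matrix_mul_assoc)
  ultimately show ?thesis
    by (simp add: annih_def matrix_diff_ldistrib matrix_diff_rdistrib projm_idempotent[OF assms(1)])
qed

lemma lsq_normal_equations:
  fixes A :: "real^'c^'r"
  assumes "invertible (transpose A ** A)"
  shows "transpose A *v (y - A *v lsq A y) = 0"
  by (simp add: lsq_def matrix_vector_mult_diff_distrib matrix_vector_mul_assoc matrix_mul_assoc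
      matrix_inv_right[OF assms])

lemma tsls_normal_equations:
  fixes X :: "real^'c^'r" and Z :: "real^'w^'r"
  assumes "invertible (transpose X ** projm Z ** X)"
  shows "transpose X *v (projm Z *v (y - X *v tsls Z X y)) = 0"
  by (simp add: tsls_def matrix_vector_mult_diff_distrib matrix_vector_mul_assoc matrix_mul_assoc
      matrix_inv_right[OF assms])

section \<open>Block matrices\<close>

definition vcat :: "real^'a \<Rightarrow> real^'b \<Rightarrow> real^('a + 'b)" where
  "vcat x y = (\<chi> j. case j of Inl a \<Rightarrow> x $ a | Inr b \<Rightarrow> y $ b)"

lemma vcat_eq_0_iff: "vcat x y = 0 \<longleftrightarrow> x = 0 \<and> y = 0"
  by (auto simp: vcat_def vec_eq_iff split: sum.splits)

lemma hcat_matrix_vector_mult: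
  "hcat A B *v x = A *v (\<chi> i. x $ Inl i) + B *v (\<chi> i. x $ Inr i)"
  unfolding hcat_def matrix_vector_mult_def
  by (simp add: vec_eq_iff UNIV_Plus_UNIV[symmetric] sum.Plus del: UNIV_Plus_UNIV)

lemma hcat_mult_vcat: "hcat A B *v vcat x y = A *v x + B *v y"
  by (simp add: hcat_matrix_vector_mult vcat_def)

lemma transpose_hcat_matrix_vector_mult:
  "transpose (hcat A B) *v y = vcat (transpose A *v y) (transpose B *v y)"
  by (simp add: vec_eq_iff hcat_def vcat_def matrix_vector_mult_def transpose_def split: sum.split)

lemma matrix_mult_hcat: "M ** hcat A B = hcat (M ** A) (M ** B)"
  by (simp add: hcat_def matrix_matrix_mult_def vec_eq_iff split: sum.splits)

lemma invertible_gram_hcat: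
  fixes A :: "real^'a^'n" and B :: "real^'b^'n"
  assumes "invertible (transpose (hcat A B) ** hcat A B)"
  shows "invertible (transpose A ** A)" "invertible (transpose B ** B)"
proof -
  have AB: "vcat x y = 0" if "A *v x + B *v y = 0" for x y
    using assms that by (simp add: invertible_gram_iff flip: hcat_mult_vcat)
  show "invertible (transpose A ** A)" "invertible (transpose B ** B)"
    using AB[of _ 0] AB[of 0] by (auto simp: invertible_gram_iff vcat_eq_0_iff)
qed

lemma projm_hcat_left:
  fixes A :: "real^'a^'n" and B :: "real^'b^'n"
  assumes "invertible (transpose (hcat A B) ** hcat A B)"
  shows "projm (hcat A B) ** A = A"
proof (rule iffD2[OF matrix_eq], rule allI)
  fix x
  have Ax: "A *v x = hcat A B *v vcat x 0"
    by (simp add: hcat_mult_vcat)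
  have "(projm (hcat A B) ** A) *v x = (projm (hcat A B) ** hcat A B) *v vcat x 0"
    by (simp only: Ax flip: matrix_vector_mul_assoc)
  then show "(projm (hcat A B) ** A) *v x = A *v x"
    by (simp only: Ax projm_mult_self[OF assms])
qed

lemma invertible_gram_annih:
  fixes Q :: "real^'k^'n" and Z :: "real^'p^'n"
  assumes Z: "invertible (transpose Z ** Z)"
    and QZ: "\<forall>x. hcat Q Z *v x = 0 \<longrightarrow> x = 0"
  shows "invertible (transpose Q ** annih Z ** Q)"
  unfolding gram_symmetric_idempotent[OF annih_symmetric[OF Z] annih_idempotent[OF Z]]
    invertible_gram_iff
proof (intro allI impI)
  fix v
  assume Mv: "(annih Z ** Q) *v v = 0"
  have "Q *v v - projm Z *v (Q *v v) = (annih Z ** Q) *v v"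
    by (simp add: annih_def matrix_diff_rdistrib matrix_vector_mult_diff_rdistrib
        matrix_vector_mul_assoc)
  then have "Q *v v = projm Z *v (Q *v v)"
    using Mv by simp
  also have "\<dots> = Z *v (matrix_inv (transpose Z ** Z) *v (transpose Z *v (Q *v v)))"
    by (simp only: projm_def matrix_vector_mul_assoc matrix_mul_assoc)
  finally obtain w where "Q *v v = Z *v w" ..
  then have "hcat Q Z *v vcat v (- w) = 0"
    by (simp add: hcat_mult_vcat linear_neg[OF matrix_vector_mul_linear])
  then show "v = 0" using QZ vcat_eq_0_iff by blast
qed

section \<open>The instrumental-variables regression\<close>

locale iv_regression =
  fixes Y1 :: "real^'k^'n" and Y2 :: "real^'n" and Z1 :: "real^'p^'n" and Z2 :: "real^'q^'n"
  assumes gram_Z: "invertible (transpose (hcat Z1 Z2) ** hcat Z1 Z2)"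
    and gram_X: "invertible (transpose (hcat Y1 Z1) ** hcat Y1 Z1)"
    and gram_PX: "invertible (transpose (hcat Y1 Z1) ** projm (hcat Z1 Z2) ** hcat Y1 Z1)"
    and gram_XVh: "invertible (transpose (hcat (hcat Y1 Z1) (annih (hcat Z1 Z2) ** Y1))
                     ** hcat (hcat Y1 Z1) (annih (hcat Z1 Z2) ** Y1))"
begin

abbreviation "Z \<equiv> hcat Z1 Z2"
abbreviation "X \<equiv> hcat Y1 Z1"
abbreviation "Vh \<equiv> annih Z ** Y1"

definition "th_ols = lsq X Y2"
definition "th_2sls = tsls Z X Y2"
definition "cf = lsq (hcat X Vh) Y2"
definition "th_cf = (\<chi> i. cf $ Inl i)"
definition "rho_cf = (\<chi> i. cf $ Inr i)"
definition "e_ols = Y2 - X *v th_ols"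
definition "e_2sls = Y2 - X *v th_2sls"
definition "e_cf = Y2 - X *v th_cf - Vh *v rho_cf"
definition "d = lead th_ols - lead th_2sls"

abbreviation "P \<equiv> projm Z"
abbreviation "M1 \<equiv> annih Z1"
abbreviation "A \<equiv> transpose (P ** Y1) ** M1 ** (P ** Y1)"
abbreviation "B \<equiv> transpose Y1 ** M1 ** Y1"
abbreviation "C \<equiv> transpose Vh ** Vh"

lemma gram_Z1: "invertible (transpose Z1 ** Z1)"
  using invertible_gram_hcat(1)[OF gram_Z] .

lemma gram_Vh: "invertible C"
  using invertible_gram_hcat(2)[OF gram_XVh] .

lemma projm_Z1: "P ** Z1 = Z1"
  using projm_hcat_left[OF gram_Z] .

lemma transpose_Z1_projm: "transpose Z1 ** P = transpose Z1"
  by (metis matrix_transpose_mul projm_Z1 projm_symmetric[OF gram_Z])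

lemma e_ols_orthogonal: "transpose X *v e_ols = 0"
  unfolding e_ols_def th_ols_def using lsq_normal_equations[OF gram_X] .

lemma projm_e_2sls_orthogonal: "transpose X *v (P *v e_2sls) = 0"
  unfolding e_2sls_def th_2sls_def using tsls_normal_equations[OF gram_PX] .

lemma e_2sls_orthogonal: "transpose Y1 *v (P *v e_2sls) = 0" "transpose Z1 *v e_2sls = 0"
proof -
  have "transpose Y1 *v (P *v e_2sls) = 0" "transpose Z1 *v (P *v e_2sls) = 0"
    using projm_e_2sls_orthogonal by (simp_all add: transpose_hcat_matrix_vector_mult vcat_eq_0_iff)
  then show "transpose Y1 *v (P *v e_2sls) = 0" "transpose Z1 *v e_2sls = 0"
    by (simp_all add: matrix_vector_mul_assoc transpose_Z1_projm)
qed

lemma e_2sls_eq_e_ols: "e_2sls = e_ols + M1 *v (Y1 *v d)"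
proof -
  define g where "g = (\<chi> i. (th_ols - th_2sls) $ Inr i)"
  have "(\<chi> i. (th_ols - th_2sls) $ Inl i) = d"
    by (simp add: d_def lead_def vec_eq_iff)
  moreover have "e_2sls - e_ols = X *v (th_ols - th_2sls)"
    by (simp add: e_2sls_def e_ols_def matrix_vector_mult_diff_distrib)
  ultimately have diff: "e_2sls - e_ols = Y1 *v d + Z1 *v g"
    by (simp only: hcat_matrix_vector_mult g_def)
  have "transpose Z1 *v (e_2sls - e_ols) = 0"
    using e_2sls_orthogonal(2) e_ols_orthogonal
    by (simp add: matrix_vector_mult_diff_distrib transpose_hcat_matrix_vector_mult vcat_eq_0_iff)
  then have "projm Z1 *v (e_2sls - e_ols) = 0"
    by (simp add: projm_def flip: matrix_vector_mul_assoc)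
  then have "e_2sls - e_ols = M1 *v (e_2sls - e_ols)"
    by (simp add: annih_def matrix_vector_mult_diff_rdistrib)
  also have "\<dots> = M1 *v (Y1 *v d)"
    by (simp add: diff matrix_vector_right_distrib matrix_vector_mul_assoc annih_mult_self[OF gram_Z1])
  finally show ?thesis by (simp add: algebra_simps)
qed

lemma norm_e_2sls_ols: "(norm e_2sls)\<^sup>2 = (norm e_ols)\<^sup>2 + d \<bullet> (B *v d)"
proof -
  have "M1 *v (Y1 *v d) = e_2sls - e_ols"
    using e_2sls_eq_e_ols by simp
  also have "\<dots> = X *v (th_ols - th_2sls)"
    by (simp add: e_2sls_def e_ols_def matrix_vector_mult_diff_distrib)
  finally have "orthogonal e_ols (M1 *v (Y1 *v d))"
    using orthogonal_column_space[OF e_ols_orthogonal] by simp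
  moreover have "(norm (M1 *v (Y1 *v d)))\<^sup>2 = d \<bullet> (B *v d)"
    by (simp add: gram_symmetric_idempotent annih_symmetric[OF gram_Z1]
        annih_idempotent[OF gram_Z1] inner_gram matrix_vector_mul_assoc)
  ultimately show ?thesis
    by (simp add: e_2sls_eq_e_ols norm_add_Pythagorean)
qed

lemma cf_normal: "transpose X *v e_cf = 0" "transpose Vh *v e_cf = 0"
proof -
  have "hcat X Vh *v cf = X *v th_cf + Vh *v rho_cf"
    by (simp add: hcat_matrix_vector_mult th_cf_def rho_cf_def)
  then have "transpose (hcat X Vh) *v e_cf = 0"
    using lsq_normal_equations[OF gram_XVh, of Y2, folded cf_def]
    by (simp add: e_cf_def diff_diff_eq)
  then show "transpose X *v e_cf = 0" "transpose Vh *v e_cf = 0"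
    by (simp_all add: transpose_hcat_matrix_vector_mult vcat_eq_0_iff)
qed

lemma transpose_Vh: "transpose Vh = transpose Y1 ** annih Z"
  by (simp add: matrix_transpose_mul annih_symmetric[OF gram_Z])

lemma projm_e_cf_orthogonal: "transpose X *v (P *v e_cf) = 0"
proof -
  have "transpose Z1 ** annih Z = transpose (annih Z ** Z1)"
    by (simp add: matrix_transpose_mul annih_symmetric[OF gram_Z])
  also have "\<dots> = 0"
    by (simp add: annih_def matrix_diff_rdistrib projm_Z1 transpose_def vec_eq_iff)
  finally have "transpose Z1 *v (annih Z *v e_cf) = 0"
    by (simp add: matrix_vector_mul_assoc)
  moreover have "transpose Y1 *v (annih Z *v e_cf) = 0"
    using cf_normal(2) by (simp add: transpose_Vh matrix_vector_mul_assoc)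
  ultimately have "transpose X *v (annih Z *v e_cf) = 0"
    by (simp add: transpose_hcat_matrix_vector_mult vcat_eq_0_iff)
  then show ?thesis
    using cf_normal(1)
    by (simp add: annih_def matrix_vector_mult_diff_rdistrib matrix_vector_mult_diff_distrib)
qed

lemma th_cf_eq_th_2sls: "th_cf = th_2sls"
proof -
  have "P ** annih Z = 0"
    by (simp add: annih_def matrix_diff_ldistrib projm_idempotent[OF gram_Z])
  then have PVh: "P *v (Vh *v rho_cf) = 0"
    by (simp add: matrix_vector_mul_assoc matrix_mul_assoc)
  have "(transpose X ** P ** X) *v (th_cf - th_2sls)
      = transpose X *v (P *v (X *v (th_cf - th_2sls)))"
    by (simp only: matrix_vector_mul_assoc matrix_mul_assoc)
  also have "X *v (th_cf - th_2sls) = e_2sls - e_cf - Vh *v rho_cf"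
    by (simp add: e_2sls_def e_cf_def matrix_vector_mult_diff_distrib)
  finally have "(transpose X ** P ** X) *v (th_cf - th_2sls) = 0"
    using projm_e_2sls_orthogonal projm_e_cf_orthogonal PVh
    by (simp add: matrix_vector_mult_diff_distrib)
  then have "th_cf - th_2sls = 0"
    using inj_matrix_vector_mult[OF gram_PX] by (metis injD matrix_vector_mult_0_right)
  then show ?thesis by simp
qed

lemma e_2sls_eq_e_cf: "e_2sls = e_cf + Vh *v rho_cf"
  by (simp add: e_2sls_def e_cf_def th_cf_eq_th_2sls)

lemma norm_e_2sls_cf: "(norm e_2sls)\<^sup>2 = (norm e_cf)\<^sup>2 + rho_cf \<bullet> (C *v rho_cf)"
  using orthogonal_column_space[OF cf_normal(2), of rho_cf]
  by (simp add: e_2sls_eq_e_cf norm_add_Pythagorean inner_gram)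

lemma gram_Vh_rho_cf: "C *v rho_cf = B *v d"
proof -
  have "C *v rho_cf = transpose Vh *v (e_2sls - e_cf)"
    by (simp add: e_2sls_eq_e_cf matrix_vector_mul_assoc)
  also have "\<dots> = transpose Vh *v e_2sls"
    using cf_normal(2) by (simp add: matrix_vector_mult_diff_distrib)
  also have "\<dots> = transpose Y1 *v (annih Z *v e_2sls)"
    by (simp add: transpose_Vh matrix_vector_mul_assoc)
  also have "\<dots> = transpose Y1 *v e_2sls - transpose Y1 *v (P *v e_2sls)"
    by (simp add: annih_def matrix_vector_mult_diff_rdistrib matrix_vector_mult_diff_distrib)
  also have "\<dots> = transpose Y1 *v (e_ols + M1 *v (Y1 *v d))"
    using e_2sls_orthogonal(1) e_2sls_eq_e_ols by simp
  also have "\<dots> = B *v d"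
    using e_ols_orthogonal
    by (simp add: matrix_vector_right_distrib transpose_hcat_matrix_vector_mult vcat_eq_0_iff
        matrix_vector_mul_assoc matrix_mul_assoc)
  finally show ?thesis .
qed

lemma gram_Vh_eq_diff: "C = B - A"
proof -
  have M: "annih Z = M1 - P ** M1 ** P"
    by (simp only: projm_annih_projm_nested[OF gram_Z projm_Z1]) (simp add: annih_def)
  have "C = transpose Y1 ** annih Z ** Y1"
    by (simp add: gram_symmetric_idempotent annih_symmetric[OF gram_Z] annih_idempotent[OF gram_Z])
  also have "\<dots> = B - A"
    unfolding M
    by (simp add: matrix_diff_ldistrib matrix_diff_rdistrib matrix_transpose_mul
        projm_symmetric[OF gram_Z] matrix_mul_assoc)
  finally show ?thesis .
qed

lemma invertible_B: "invertible B"
  using invertible_gram_annih[OF gram_Z1] gram_X by (simp add: invertible_gram_iff)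

lemma invertible_A: "invertible A"
proof (rule invertible_gram_annih[OF gram_Z1], intro allI impI)
  fix x
  assume "hcat (P ** Y1) Z1 *v x = 0"
  moreover have "hcat (P ** Y1) Z1 = P ** X"
    by (simp add: matrix_mult_hcat projm_Z1)
  ultimately have "(transpose X ** P ** X) *v x = 0"
    by (simp add: matrix_mul_assoc flip: matrix_vector_mul_assoc)
  then show "x = 0"
    using inj_matrix_vector_mult[OF gram_PX] by (metis injD matrix_vector_mult_0_right)
qed

lemma tHn_eq:
  assumes "s \<noteq> 0"
  shows "tHn Y1 Z1 Z (lead th_ols) (lead th_2sls) s s = d \<bullet> ((B ** matrix_inv C ** A) *v d) / s"
proof -
  note inverses = matrix_inv_diff_matrix_inv[OF invertible_A invertible_B,
      folded gram_Vh_eq_diff, OF gram_Vh]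
  have "tHn Y1 Z1 Z (lead th_ols) (lead th_2sls) s s
      = d \<bullet> (matrix_inv (s *\<^sub>R (matrix_inv A - matrix_inv B)) *v d)"
    by (simp add: tHn_def Let_def d_def scaleR_diff_right)
  then show ?thesis
    by (simp add: matrix_inv_scaleR[OF assms inverses(1)] inverses(2)
        scaleR_matrix_vector_assoc[symmetric] divide_inverse mult.commute)
qed

lemma norm_e_cf:
  "(norm e_cf)\<^sup>2 = (norm e_ols)\<^sup>2 - d \<bullet> ((B ** matrix_inv C ** A) *v d)"
  "(norm e_cf)\<^sup>2 = (norm e_2sls)\<^sup>2 - d \<bullet> ((B ** matrix_inv C ** A) *v d) - d \<bullet> (B *v d)"
proof -
  have "transpose B = B"
    by (simp add: matrix_transpose_mul annih_symmetric[OF gram_Z1] matrix_mul_assoc)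
  then have "rho_cf \<bullet> (C *v rho_cf) = d \<bullet> ((B ** matrix_inv C ** A) *v d) + d \<bullet> (B *v d)"
    using quadratic_form_solution gram_Vh gram_Vh_rho_cf unfolding gram_Vh_eq_diff by blast
  then show "(norm e_cf)\<^sup>2 = (norm e_ols)\<^sup>2 - d \<bullet> ((B ** matrix_inv C ** A) *v d)"
    "(norm e_cf)\<^sup>2 = (norm e_2sls)\<^sup>2 - d \<bullet> ((B ** matrix_inv C ** A) *v d) - d \<bullet> (B *v d)"
    using norm_e_2sls_cf norm_e_2sls_ols by linarith+
qed

end

theorem lemma2:
  fixes Y1 :: "real^'k^'n" and Y2 :: "real^'n"
    and Z1 :: "real^'p^'n" and Z2 :: "real^'q^'n"
  defines "Z \<equiv> hcat Z1 Z2"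
    and "X \<equiv> hcat Y1 Z1"
  defines "Vh \<equiv> annih Z ** Y1"
  defines "th_ols \<equiv> lsq X Y2"
    and "th_2sls \<equiv> tsls Z X Y2"
    and "cf \<equiv> lsq (hcat X Vh) Y2"
  defines "b_ols \<equiv> lead th_ols"
    and "b_2sls \<equiv> lead th_2sls"
    and "th_cf \<equiv> (\<chi> i. cf $ Inl i)"
    and "rho_cf \<equiv> (\<chi> i. cf $ Inr i)"
  defines "s2u \<equiv> (norm (Y2 - X *v th_cf - Vh *v rho_cf))\<^sup>2 / real CARD('n)"
    and "s2ols \<equiv> (norm (Y2 - X *v th_ols))\<^sup>2 / real CARD('n)"
    and "s2tsls \<equiv> (norm (Y2 - X *v th_2sls))\<^sup>2 / real CARD('n)"
  defines "tH1 \<equiv> tHn Y1 Z1 Z b_ols b_2sls s2ols s2ols"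
    and "tH2 \<equiv> tHn Y1 Z1 Z b_ols b_2sls s2tsls s2tsls"
  defines "Hn \<equiv> (b_ols - b_2sls) \<bullet> ((transpose Y1 ** annih Z1 ** Y1) *v (b_ols - b_2sls))
                 / (real CARD('n) * s2tsls)"
  assumes "invertible (transpose Z ** Z)"
    and "invertible (transpose X ** X)"
    and "invertible (transpose X ** projm Z ** X)"
    and "invertible (transpose (hcat X Vh) ** hcat X Vh)"
    and "s2u > 0" and "s2ols > 0" and "s2tsls > 0"
    and "invertible (tHmat Y1 Z1 Z s2ols s2ols)"
    and "invertible (tHmat Y1 Z1 Z s2tsls s2tsls)"
  shows "s2u = s2ols * (1 - tH1 / real CARD('n))
       \<and> s2u = s2tsls * (1 - tH2 / real CARD('n) - Hn)"
proof -
  interpret iv: iv_regression Y1 Y2 Z1 Z2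
    using \<open>invertible (transpose Z ** Z)\<close> \<open>invertible (transpose X ** X)\<close>
      \<open>invertible (transpose X ** projm Z ** X)\<close>
      \<open>invertible (transpose (hcat X Vh) ** hcat X Vh)\<close>
    unfolding Z_def X_def Vh_def by unfold_locales
  define q where "q = iv.d \<bullet> ((iv.B ** matrix_inv iv.C ** iv.A) *v iv.d)"
  define b where "b = iv.d \<bullet> (iv.B *v iv.d)"
  define N where "N = real CARD('n)"
  have residuals: "s2u = (norm iv.e_cf)\<^sup>2 / N" "s2ols = (norm iv.e_ols)\<^sup>2 / N"
    "s2tsls = (norm iv.e_2sls)\<^sup>2 / N"
    by (simp_all add: s2u_def s2ols_def s2tsls_def iv.e_cf_def iv.e_ols_def iv.e_2sls_def
        iv.th_cf_def iv.rho_cf_def iv.cf_def iv.th_ols_def iv.th_2sls_def th_cf_def rho_cf_def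
        cf_def th_ols_def th_2sls_def Z_def X_def Vh_def N_def)
  have "N > 0"
    by (simp add: N_def)
  have tH: "tH1 = q / s2ols" "tH2 = q / s2tsls"
    using iv.tHn_eq \<open>s2ols > 0\<close> \<open>s2tsls > 0\<close>
    by (simp_all add: tH1_def tH2_def q_def b_ols_def b_2sls_def th_ols_def th_2sls_def
        iv.th_ols_def iv.th_2sls_def Z_def X_def)
  have Hn: "Hn = b / (N * s2tsls)"
    by (simp add: Hn_def b_def N_def iv.d_def b_ols_def b_2sls_def th_ols_def th_2sls_def
        iv.th_ols_def iv.th_2sls_def Z_def X_def)
  have "s2u = s2ols - q / N"
    using iv.norm_e_cf(1) residuals unfolding q_def by (simp add: diff_divide_distrib)
  moreover have "s2u = s2tsls - q / N - b / N"
    using iv.norm_e_cf(2) residuals unfolding q_def b_def by (simp add: diff_divide_distrib)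
  moreover have "s2ols * (1 - tH1 / N) = s2ols - q / N"
    using \<open>s2ols > 0\<close> by (simp add: tH field_simps)
  moreover have "s2tsls * (1 - tH2 / N - Hn) = s2tsls - q / N - b / N"
    using \<open>s2tsls > 0\<close> \<open>N > 0\<close> by (simp add: tH Hn field_simps)
  ultimately show ?thesis
    by (simp add: N_def)
qed

end
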